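(* Let $\mathbb{K}$ have characteristic $p>2$ and let $m\ge2$ be even. Let $K^{2,m}$ be the Lie superalgebra with basis $x_0,x_1\,|\,y_1,\dots,y_m$ (even $|$ odd) and nonzero brackets $[x_0,y_i]=-[y_i,x_0]=y_{i+1}$ for $1\le i\le m-1$ and $[y_i,y_{m-i}]=[y_{m-i},y_i]=(-1)^{(m-2i)/2}x_1$ for $1\le i\le m/2$. Then $K^{2,m}$ admits a $p|2p$-structure if and only if $m\le p$, and in that case the $p|2p$-structures are exactly those given by $x_0^{[p]}=s_1x_1$, $x_1^{[p]}=s_2x_1$ with $s_1,s_2\in\mathbb{K}$.
   Context: A $p|2p$-structure on a Lie superalgebra $L$ over a field of characteristic $p>2$ is a map $x\mapsto x^{[p]}$, $L_{\bar0}\to L_{\bar0}$, with $(\lambda x)^{[p]}=\lambda^px^{[p]}$, $(x+y)^{[p]}=x^{[p]}+y^{[p]}+\sum_{i=1}^{p-1}s_i(x,y)$ (where $i s_i(x,y)$ is the coefficient of $\lambda^{i-1}$ in $(\mathrm{ad}_{\lambda x+y})^{p-1}(x)$), and $\mathrm{ad}_{x^{[p]}}(y)=(\mathrm{ad}_x)^p(y)$ for all $x\in L_{\bar0}$, $y\in L$. *)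

theory Defs
  imports Main "HOL-Computational_Algebra.Polynomial"
begin

text \<open>Basis indices of K^{2,m}: X 0 = x_0, X 1 = x_1 (even), Y i = y_i, 1 <= i <= m (odd).
  Elements of the algebra are coefficient functions idx => 'a vanishing off the basis.\<close>

datatype idx = X nat | Y nat

definition basis :: "nat \<Rightarrow> idx set" where
  "basis m = {X 0, X 1} \<union> Y ` {1..m}"

definition Lsp :: "nat \<Rightarrow> (idx \<Rightarrow> 'a::zero) set" where
  "Lsp m = {v. \<forall>j. j \<notin> basis m \<longrightarrow> v j = 0}"

definition Lev :: "(idx \<Rightarrow> 'a::zero) set" where
  "Lev = {v. \<forall>j. j \<notin> {X 0, X 1} \<longrightarrow> v j = 0}"

definition e :: "idx \<Rightarrow> idx \<Rightarrow> 'a::{zero,one}" where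
  "e j = (\<lambda>k. if k = j then 1 else 0)"

definition vsc :: "'a::times \<Rightarrow> (idx \<Rightarrow> 'a) \<Rightarrow> idx \<Rightarrow> 'a" where
  "vsc c v = (\<lambda>j. c * v j)"

definition vadd :: "(idx \<Rightarrow> 'a::plus) \<Rightarrow> (idx \<Rightarrow> 'a) \<Rightarrow> idx \<Rightarrow> 'a" where
  "vadd u v = (\<lambda>j. u j + v j)"

text \<open>Structure constants: coefficient of basis vector c in [a,b].
  [x_0,y_i] = -[y_i,x_0] = y_{i+1} (1<=i<=m-1);
  [y_i,y_{m-i}] = [y_{m-i},y_i] = (-1)^((m-2i)/2) x_1 for 1<=i<=m/2.\<close>
fun sc :: "nat \<Rightarrow> idx \<Rightarrow> idx \<Rightarrow> idx \<Rightarrow> 'a::comm_ring_1" where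
  "sc m (X a) (Y i) c = (if a = 0 \<and> 1 \<le> i \<and> i < m \<and> c = Y (Suc i) then 1 else 0)"
| "sc m (Y i) (X a) c = (if a = 0 \<and> 1 \<le> i \<and> i < m \<and> c = Y (Suc i) then -1 else 0)"
| "sc m (Y i) (Y j) c = (if 1 \<le> i \<and> 1 \<le> j \<and> i + j = m \<and> c = X 1
                          then (-1) ^ ((m - 2 * min i j) div 2) else 0)"
| "sc m (X a) (X b) c = 0"

text \<open>Bilinear bracket of K^{2,m}, over an arbitrary commutative ring of scalars
  (used with 'a and with 'a poly, the latter for the parameter lambda).\<close>
definition br :: "nat \<Rightarrow> (idx \<Rightarrow> 'a::comm_ring_1) \<Rightarrow> (idx \<Rightarrow> 'a) \<Rightarrow> idx \<Rightarrow> 'a" where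
  "br m u v = (\<lambda>c. \<Sum>a\<in>basis m. \<Sum>b\<in>basis m. u a * v b * sc m a b c)"

text \<open>s_i(x,y): i * s_i(x,y) is the coefficient of lambda^(i-1) in (ad_{lambda x + y})^(p-1)(x).
  Computed with coefficients in the polynomial ring 'a[lambda].\<close>
definition s_fun :: "nat \<Rightarrow> nat \<Rightarrow> nat \<Rightarrow> (idx \<Rightarrow> 'a::field) \<Rightarrow> (idx \<Rightarrow> 'a) \<Rightarrow> idx \<Rightarrow> 'a" where
  "s_fun m p i x y =
     (let z = (\<lambda>j. [:y j, x j:]);
          W = (br m z ^^ (p - 1)) (\<lambda>j. [:x j:])
      in (\<lambda>j. inverse (of_nat i) * coeff (W j) (i - 1)))"

text \<open>A p|2p-structure on K^{2,m}: a map L_0 -> L_0 (values off L_0 are irrelevant).\<close>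
definition is_pstruct :: "nat \<Rightarrow> nat \<Rightarrow> ((idx \<Rightarrow> 'a::field) \<Rightarrow> (idx \<Rightarrow> 'a)) \<Rightarrow> bool" where
  "is_pstruct m p \<phi> \<longleftrightarrow>
     (\<forall>x\<in>Lev. \<phi> x \<in> Lev) \<and>
     (\<forall>c. \<forall>x\<in>Lev. \<phi> (vsc c x) = vsc (c ^ p) (\<phi> x)) \<and>
     (\<forall>x\<in>Lev. \<forall>y\<in>Lev. \<phi> (vadd x y) =
         vadd (vadd (\<phi> x) (\<phi> y)) (\<lambda>j. \<Sum>i=1..p-1. s_fun m p i x y j)) \<and>
     (\<forall>x\<in>Lev. \<forall>y\<in>Lsp m. br m (\<phi> x) y = (br m x ^^ p) y)"

end

theory Submission
  imports Defs "HOL-Computational_Algebra.Primes"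
begin

text \<open>For an even element x, ad x is x(x_0) times the shift y_i \<mapsto> y_{i+1} (y_m \<mapsto> 0), which is
  nilpotent of order m. If m > p, then (ad x_0)^p sends y_1 to y_{p+1} \<noteq> 0, which no ad of an even
  element does, so there is no [p]-map. If m \<le> p, then (ad x)^p = 0 forces x^[p] to be central,
  i.e. a multiple of x_1; since L_0 is abelian all s_i vanish, and such maps are additive by the
  Frobenius identity, hence are exactly the p-semilinear maps L_0 \<rightarrow> K x_1.\<close>

definition shiftY :: "nat \<Rightarrow> (idx \<Rightarrow> 'a::zero) \<Rightarrow> idx \<Rightarrow> 'a" where
  "shiftY m y = (\<lambda>k. case k of X _ \<Rightarrow> 0 | Y j \<Rightarrow> if 2 \<le> j \<and> j \<le> m then y (Y (j - 1)) else 0)"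

lemma finite_basis [simp]: "finite (basis m)"
  by (simp add: basis_def)

lemma e_Lev [simp]: "e (X 0) \<in> Lev" "e (X 1) \<in> Lev"
  by (auto simp: Lev_def e_def)

lemma vsc_Lev [simp]: "(x :: idx \<Rightarrow> 'a::comm_ring_1) \<in> Lev \<Longrightarrow> vsc c x \<in> Lev"
  by (auto simp: Lev_def vsc_def)

lemma e_Y_Lsp: "1 \<le> i \<Longrightarrow> i \<le> m \<Longrightarrow> e (Y i) \<in> Lsp m"
  by (auto simp: Lsp_def e_def basis_def)

lemma Lev_eq_vadd_vsc:
  fixes x :: "idx \<Rightarrow> 'a::comm_ring_1"
  assumes "x \<in> Lev"
  shows "x = vadd (vsc (x (X 0)) (e (X 0))) (vsc (x (X 1)) (e (X 1)))"
proof
  fix j show "x j = vadd (vsc (x (X 0)) (e (X 0))) (vsc (x (X 1)) (e (X 1))) j"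
    using assms by (cases "j \<in> {X 0, X 1}") (auto simp: Lev_def vsc_def vadd_def e_def)
qed

lemma Lev_eq_vsc_e_X1:
  fixes v :: "idx \<Rightarrow> 'a::comm_ring_1"
  assumes "v \<in> Lev" "v (X 0) = 0"
  shows "v = vsc (v (X 1)) (e (X 1))"
  using Lev_eq_vadd_vsc[OF assms(1)] assms(2) by (simp add: vadd_def vsc_def)

lemma br_Lev_eq_shiftY:
  fixes x y :: "idx \<Rightarrow> 'a::comm_ring_1"
  assumes "x \<in> Lev"
  shows "br m x y = vsc (x (X 0)) (shiftY m y)"
proof
  fix c
  let ?F = "\<lambda>a. \<Sum>b\<in>basis m. x a * y b * sc m a b c"
  have only_X0: "?F a = (if a = X 0 then ?F (X 0) else 0)" for a
  proof -
    have "x a * y b * sc m a b c = 0" if "a \<noteq> X 0" for b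
      using that assms by (cases a; cases b) (auto simp: Lev_def)
    then show ?thesis by auto
  qed
  have X0_basis: "X 0 \<in> basis m" by (simp add: basis_def)
  have "br m x y c = ?F (X 0)"
    unfolding br_def by (subst only_X0) (simp add: X0_basis)
  also have "\<dots> = vsc (x (X 0)) (shiftY m y) c"
  proof (cases c)
    case (X n)
    then have "x (X 0) * y b * sc m (X 0) b c = 0" for b by (cases b) auto
    then show ?thesis using X by (simp add: shiftY_def vsc_def)
  next
    case (Y j)
    have term_eq: "x (X 0) * y b * sc m (X 0) b c =
       (if 2 \<le> j \<and> j \<le> m \<and> b = Y (j - 1) then x (X 0) * y (Y (j - 1)) else 0)" for b
      using Y by (cases b) auto
    have "2 \<le> j \<Longrightarrow> j \<le> m \<Longrightarrow> Y (j - 1) \<in> basis m"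
      unfolding basis_def by (intro UnI2 imageI) auto
    then show ?thesis
      unfolding term_eq using Y by (auto simp: shiftY_def vsc_def)
  qed
  finally show "br m x y c = vsc (x (X 0)) (shiftY m y) c" .
qed

lemma shiftY_vsc: "shiftY m (vsc (c :: 'a::comm_ring_1) y) = vsc c (shiftY m y)"
  by (auto simp: shiftY_def vsc_def fun_eq_iff split: idx.split)

lemma funpow_br_Lev:
  fixes x y :: "idx \<Rightarrow> 'a::comm_ring_1"
  assumes "x \<in> Lev"
  shows "(br m x ^^ k) y = vsc (x (X 0) ^ k) ((shiftY m ^^ k) y)"
proof (induction k)
  case 0
  show ?case by (simp add: vsc_def)
next
  case (Suc k)
  then show ?case
    by (simp add: br_Lev_eq_shiftY[OF assms] shiftY_vsc) (simp add: vsc_def mult.assoc)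
qed

lemma funpow_shiftY:
  "(shiftY m ^^ Suc k) y =
     (\<lambda>c. case c of X _ \<Rightarrow> 0 | Y j \<Rightarrow> if Suc k < j \<and> j \<le> m then y (Y (j - Suc k)) else 0)"
  by (induction k) (auto simp: shiftY_def fun_eq_iff split: idx.split)

lemma funpow_shiftY_eq_0:
  assumes "m \<le> k" "0 < k"
  shows "(shiftY m ^^ k) y = (\<lambda>_. 0)"
proof -
  obtain l where "k = Suc l" using assms(2) gr0_conv_Suc by blast
  then show ?thesis
    unfolding \<open>k = Suc l\<close> funpow_shiftY using assms(1) \<open>k = Suc l\<close>
    by (auto simp: fun_eq_iff split: idx.split)
qed

lemma funpow_shiftY_Lev_eq_0:
  assumes "v \<in> Lev" "0 < k"
  shows "(shiftY m ^^ k) v = (\<lambda>_. 0)"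
proof -
  obtain l where "k = Suc l" using assms(2) gr0_conv_Suc by blast
  then show ?thesis
    unfolding \<open>k = Suc l\<close> funpow_shiftY using assms(1) by (auto simp: fun_eq_iff Lev_def split: idx.split)
qed

lemma funpow_br_Lev_eq_0:
  fixes x y :: "idx \<Rightarrow> 'a::comm_ring_1"
  assumes "x \<in> Lev" "m \<le> k" "0 < k"
  shows "(br m x ^^ k) y = (\<lambda>_. 0)"
  using assms by (simp add: funpow_br_Lev funpow_shiftY_eq_0 vsc_def)

lemma s_fun_Lev_eq_0:
  fixes x y :: "idx \<Rightarrow> 'a::field"
  assumes "x \<in> Lev" "y \<in> Lev" "2 \<le> p"
  shows "s_fun m p i x y = (\<lambda>_. 0)"
proof -
  have "(\<lambda>j. [:y j, x j:]) \<in> Lev" "(\<lambda>j. [:x j:]) \<in> Lev"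
    using assms(1,2) by (auto simp: Lev_def)
  then have "(br m (\<lambda>j. [:y j, x j:]) ^^ (p - 1)) (\<lambda>j. [:x j:]) = (\<lambda>_. 0)"
    using assms(3) by (simp add: funpow_br_Lev funpow_shiftY_Lev_eq_0 vsc_def)
  then show ?thesis by (simp add: s_fun_def)
qed

lemma is_pstruct_Lev: "is_pstruct m p \<phi> \<Longrightarrow> x \<in> Lev \<Longrightarrow> \<phi> x \<in> Lev"
  by (simp add: is_pstruct_def)

lemma is_pstruct_br:
  "is_pstruct m p \<phi> \<Longrightarrow> x \<in> Lev \<Longrightarrow> y \<in> Lsp m \<Longrightarrow> br m (\<phi> x) y = (br m x ^^ p) y"
  by (simp add: is_pstruct_def)

lemma is_pstruct_additive:
  assumes "is_pstruct m p \<phi>" "2 \<le> p" "x \<in> Lev" "y \<in> Lev"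
  shows "\<phi> (vadd x y) = vadd (\<phi> x) (\<phi> y)"
proof -
  have "\<phi> (vadd x y) = vadd (vadd (\<phi> x) (\<phi> y)) (\<lambda>j. \<Sum>i=1..p-1. s_fun m p i x y j)"
    using assms(1,3,4) unfolding is_pstruct_def by blast
  then show ?thesis
    by (simp add: s_fun_Lev_eq_0[OF assms(3,4,2)] vadd_def)
qed

lemma is_pstruct_eq_on_Lev:
  fixes \<phi> :: "(idx \<Rightarrow> 'a::field) \<Rightarrow> (idx \<Rightarrow> 'a)"
  assumes "is_pstruct m p \<phi>" "2 \<le> p" "x \<in> Lev"
  shows "\<phi> x = vadd (vsc (x (X 0) ^ p) (\<phi> (e (X 0)))) (vsc (x (X 1) ^ p) (\<phi> (e (X 1))))"
proof -
  have semilinear: "\<phi> (vsc c u) = vsc (c ^ p) (\<phi> u)" if "u \<in> Lev" for c u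
    using assms(1) that unfolding is_pstruct_def by blast
  have "\<phi> x = \<phi> (vadd (vsc (x (X 0)) (e (X 0))) (vsc (x (X 1)) (e (X 1))))"
    using Lev_eq_vadd_vsc[OF assms(3)] by simp
  also have "\<dots> = vadd (\<phi> (vsc (x (X 0)) (e (X 0)))) (\<phi> (vsc (x (X 1)) (e (X 1))))"
    using assms(1,2) by (intro is_pstruct_additive vsc_Lev e_Lev)
  finally show ?thesis by (simp only: semilinear e_Lev)
qed

lemma is_pstruct_imp_le:
  assumes "is_pstruct m p (\<phi> :: (idx \<Rightarrow> 'a::field) \<Rightarrow> (idx \<Rightarrow> 'a))" "2 \<le> p"
  shows "m \<le> p"
proof (rule ccontr)
  assume "\<not> m \<le> p"
  then have e_Y1: "e (Y 1) \<in> Lsp m" by (intro e_Y_Lsp) auto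
  have \<phi>_Lev: "\<phi> (e (X 0)) \<in> Lev"
    using assms(1) by (rule is_pstruct_Lev) simp
  have "br m (\<phi> (e (X 0))) (e (Y 1)) = (br m (e (X 0)) ^^ p) (e (Y 1))"
    using assms(1) e_Y1 by (rule is_pstruct_br[OF _ e_Lev(1)])
  moreover have "br m (\<phi> (e (X 0))) (e (Y 1)) (Y (Suc p)) = 0"
    unfolding br_Lev_eq_shiftY[OF \<phi>_Lev] using assms(2) by (simp add: shiftY_def vsc_def e_def)
  moreover obtain k where "p = Suc k" using assms(2) by (cases p) auto
  then have "(br m (e (X 0)) ^^ p) (e (Y 1)) (Y (Suc p)) = 1"
    unfolding funpow_br_Lev[OF e_Lev(1)] \<open>p = Suc k\<close> funpow_shiftY
    using \<open>\<not> m \<le> p\<close> \<open>p = Suc k\<close> by (simp add: vsc_def e_def)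
  ultimately show False by (metis zero_neq_one)
qed

lemma is_pstruct_X0_eq_0:
  assumes "is_pstruct m p (\<phi> :: (idx \<Rightarrow> 'a::field) \<Rightarrow> (idx \<Rightarrow> 'a))"
    and "m \<le> p" "2 \<le> m" "x \<in> Lev"
  shows "\<phi> x (X 0) = 0"
proof -
  have e_Y1: "e (Y 1) \<in> Lsp m" using assms(3) by (intro e_Y_Lsp) auto
  have \<phi>_Lev: "\<phi> x \<in> Lev"
    using assms(1,4) by (rule is_pstruct_Lev)
  have "br m (\<phi> x) (e (Y 1)) = (br m x ^^ p) (e (Y 1))"
    using assms(1,4) e_Y1 by (rule is_pstruct_br)
  also have "\<dots> = (\<lambda>_. 0)"
    using assms(2,3,4) by (simp add: funpow_br_Lev_eq_0)
  finally have "br m (\<phi> x) (e (Y 1)) (Y 2) = 0" by simp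
  then show ?thesis
    using assms(3) by (simp add: br_Lev_eq_shiftY[OF \<phi>_Lev] shiftY_def vsc_def e_def)
qed

definition pstruct_std :: "nat \<Rightarrow> 'a::comm_ring_1 \<Rightarrow> 'a \<Rightarrow> (idx \<Rightarrow> 'a) \<Rightarrow> idx \<Rightarrow> 'a" where
  "pstruct_std p s1 s2 v = vsc (v (X 0) ^ p * s1 + v (X 1) ^ p * s2) (e (X 1))"

lemma pstruct_std_Lev: "pstruct_std p s1 s2 x \<in> Lev"
  unfolding pstruct_std_def by (intro vsc_Lev e_Lev)

lemma pstruct_std_e_X:
  assumes "0 < p"
  shows "pstruct_std p s1 s2 (e (X 0)) = vsc s1 (e (X 1))"
    and "pstruct_std p s1 s2 (e (X 1)) = vsc s2 (e (X 1))"
  using assms by (simp_all add: pstruct_std_def e_def zero_power)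

lemma is_pstruct_pstruct_std:
  assumes "CHAR('a::field) = p" "2 \<le> p" "m \<le> p"
  shows "is_pstruct m p (pstruct_std p s1 s2 :: (idx \<Rightarrow> 'a) \<Rightarrow> (idx \<Rightarrow> 'a))"
  unfolding is_pstruct_def
proof (intro conjI ballI allI)
  fix x :: "idx \<Rightarrow> 'a"
  show "pstruct_std p s1 s2 x \<in> Lev" by (rule pstruct_std_Lev)
next
  fix c :: 'a and x :: "idx \<Rightarrow> 'a"
  show "pstruct_std p s1 s2 (vsc c x) = vsc (c ^ p) (pstruct_std p s1 s2 x)"
    by (simp add: pstruct_std_def vsc_def fun_eq_iff power_mult_distrib algebra_simps)
next
  fix x y :: "idx \<Rightarrow> 'a"
  assume "x \<in> Lev" "y \<in> Lev"
  have "prime CHAR('a)"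
    using assms(1,2) by (intro prime_CHAR_semidom) simp
  then have frobenius: "(a + b) ^ p = a ^ p + b ^ p" for a b :: 'a
    using freshmans_dream assms(1) by blast
  show "pstruct_std p s1 s2 (vadd x y) = vadd (vadd (pstruct_std p s1 s2 x) (pstruct_std p s1 s2 y))
          (\<lambda>j. \<Sum>i=1..p-1. s_fun m p i x y j)"
    by (simp add: s_fun_Lev_eq_0[OF \<open>x \<in> Lev\<close> \<open>y \<in> Lev\<close> assms(2)] pstruct_std_def
        vsc_def vadd_def fun_eq_iff frobenius algebra_simps)
next
  fix x y :: "idx \<Rightarrow> 'a"
  assume "x \<in> Lev"
  have "pstruct_std p s1 s2 x (X 0) = 0"
    by (simp add: pstruct_std_def vsc_def e_def)
  then show "br m (pstruct_std p s1 s2 x) y = (br m x ^^ p) y"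
    using \<open>x \<in> Lev\<close> assms(2,3)
    by (simp add: br_Lev_eq_shiftY[OF pstruct_std_Lev] funpow_br_Lev_eq_0 vsc_def)
qed

theorem mainTheorem13:
  fixes p m :: nat
  assumes "CHAR('a::field) = p" and "p > 2" and "m \<ge> 2" and "even m"
  shows "((\<exists>\<phi> :: (idx \<Rightarrow> 'a) \<Rightarrow> (idx \<Rightarrow> 'a). is_pstruct m p \<phi>) \<longleftrightarrow> m \<le> p) \<and>
    (m \<le> p \<longrightarrow>
      (\<forall>\<phi> :: (idx \<Rightarrow> 'a) \<Rightarrow> (idx \<Rightarrow> 'a). is_pstruct m p \<phi> \<longrightarrow>
          (\<exists>s1 s2. \<phi> (e (X 0)) = vsc s1 (e (X 1)) \<and> \<phi> (e (X 1)) = vsc s2 (e (X 1)))) \<and>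
      (\<forall>s1 s2 :: 'a. \<exists>\<phi>. is_pstruct m p \<phi> \<and>
          \<phi> (e (X 0)) = vsc s1 (e (X 1)) \<and> \<phi> (e (X 1)) = vsc s2 (e (X 1))) \<and>
      (\<forall>\<phi> \<psi> :: (idx \<Rightarrow> 'a) \<Rightarrow> (idx \<Rightarrow> 'a). is_pstruct m p \<phi> \<longrightarrow> is_pstruct m p \<psi> \<longrightarrow>
          \<phi> (e (X 0)) = \<psi> (e (X 0)) \<longrightarrow> \<phi> (e (X 1)) = \<psi> (e (X 1)) \<longrightarrow>
          (\<forall>x\<in>Lev. \<phi> x = \<psi> x)))"
proof -
  have p2: "2 \<le> p" using assms(2) by simp
  have values_on_basis: "\<exists>s1 s2. \<phi> (e (X 0)) = vsc s1 (e (X 1)) \<and> \<phi> (e (X 1)) = vsc s2 (e (X 1))"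
    if "is_pstruct m p \<phi>" "m \<le> p" for \<phi> :: "(idx \<Rightarrow> 'a) \<Rightarrow> (idx \<Rightarrow> 'a)"
  proof -
    have "\<phi> x = vsc (\<phi> x (X 1)) (e (X 1))" if "x \<in> Lev" for x
      using is_pstruct_Lev[OF \<open>is_pstruct m p \<phi>\<close> that]
        is_pstruct_X0_eq_0[OF \<open>is_pstruct m p \<phi>\<close> \<open>m \<le> p\<close> assms(3) that]
      by (rule Lev_eq_vsc_e_X1)
    from this[OF e_Lev(1)] this[OF e_Lev(2)] show ?thesis by blast
  qed
  have existence: "\<exists>\<phi>. is_pstruct m p \<phi> \<and>
      \<phi> (e (X 0)) = vsc s1 (e (X 1)) \<and> \<phi> (e (X 1)) = vsc s2 (e (X 1))"
    if "m \<le> p" for s1 s2 :: 'a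
    using is_pstruct_pstruct_std[OF assms(1) p2 that] pstruct_std_e_X[of p s1 s2] p2 by auto
  have uniqueness: "\<phi> x = \<psi> x"
    if "is_pstruct m p \<phi>" "is_pstruct m p \<psi>" "\<phi> (e (X 0)) = \<psi> (e (X 0))"
      "\<phi> (e (X 1)) = \<psi> (e (X 1))" "x \<in> Lev" for \<phi> \<psi> :: "(idx \<Rightarrow> 'a) \<Rightarrow> (idx \<Rightarrow> 'a)" and x
    using is_pstruct_eq_on_Lev[OF that(1) p2 that(5)] is_pstruct_eq_on_Lev[OF that(2) p2 that(5)]
      that(3,4) by simp
  have "m \<le> p" if "is_pstruct m p \<phi>" for \<phi> :: "(idx \<Rightarrow> 'a) \<Rightarrow> (idx \<Rightarrow> 'a)"
    using that p2 by (rule is_pstruct_imp_le)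
  with existence show ?thesis
    using values_on_basis uniqueness by (meson order_refl)
qed

end
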